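(* In the setting described in the context, for all sufficiently large $y$ (in terms of $E$, $\gamma$ and $\delta$), there exists a subset of $\mathbf{D}_{\mathbf{P}}$ which can be partitioned into $\frac{2^{\vert\mathbf{P}\vert}}{2M}$ sets of $M$ elements each, each of these sets having logarithmic spread greater than $1$.
   Context: For a finite set $\mathbf{S}$ of positive integers, $\mathbf{D}_{\mathbf{S}}=\{d: d\mid\prod_{s\in\mathbf{S}}s\}$, and the logarithmic spread of $\mathbf{S}$ is $\min_{s_1\neq s_2}\vert\log s_1-\log s_2\vert$ over $s_1,s_2\in\mathbf{S}$. $P^+(n)$ denotes the largest prime factor of $n$. Setting: fix $E>0$ and $\gamma>0$ such that $\#\{p\leq x: P^+(p-1)\leq x^{1-E}\}\geq\frac{\gamma x}{\log x}$ for all sufficiently large $x$. Fix $\delta>0$ and put $\Delta=\delta^2/24$. Fix positive constants $C_5,C_6$ and, for each positive integer $x$, an integer $s_x\in[\sqrt{\log x},e^{\sqrt{\log x}}]$ such that $\sum_{q\leq x^{2/5},\,s_x\nmid q}\max_{2\leq z\leq x}\max_{(a,q)=1}\vert\pi(z;q,a)-\pi(z)/\phi(q)\vert\leq C_5x e^{-C_6\sqrt{\log x}}$ for all $x$. Let $M$ be a fixed power of two depending only on $\delta$ (in the paper, the smallest power of two greater than the integer $N$ supplied, for $m=2$ and this $\Delta$, by the Maynard-type theorem: for any admissible set of $N$ linear forms $d_in+c_i$ with positive integer coefficients and $d_i>c_i$, at least $x/(\log x)^N$ integers $n\in[x,2x)$ make at least $m$ of the forms prime). Let $y$ be a large real parameter,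 $\Upsilon=\lceil e^{y^{2+2\Delta}}\rceil$, $\kappa=\prod_{y/\log y\leq p\leq y,\ P^+(p-1)\leq y^{1-E}}p^2$, and let $p^*$ be the largest prime factor of $s_{2\Upsilon\kappa}$. Finally $\mathbf{P}=\{p\text{ prime}: \frac{y}{\log y}\leq p\leq y,\ P^+(p-1)\leq y^{1-E},\ p\neq p^*\}$. *)

theory Defs
  imports "HOL-Analysis.Analysis" "HOL-Number_Theory.Number_Theory" "HOL-Library.Disjoint_Sets"
begin

definition Pplus :: "nat \<Rightarrow> nat" where
  "Pplus n = (if n \<le> 1 then 1 else Max (prime_factors n))"

definition DS :: "nat set \<Rightarrow> nat set" where
  "DS S = {d. d dvd (\<Prod>s\<in>S. s)}"

(* "logarithmic spread of T is greater than c": the minimum of |log s1 - log s2|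
   over distinct s1, s2 in T exceeds c (vacuous if T has fewer than 2 elements) *)
definition log_spread_gt :: "nat set \<Rightarrow> real \<Rightarrow> bool" where
  "log_spread_gt T c \<longleftrightarrow> (\<forall>s1\<in>T. \<forall>s2\<in>T. s1 \<noteq> s2 \<longrightarrow> \<bar>ln (real s1) - ln (real s2)\<bar> > c)"

definition prime_pi :: "real \<Rightarrow> nat" where
  "prime_pi z = card {p::nat. prime p \<and> real p \<le> z}"

definition prime_pi_ap :: "real \<Rightarrow> nat \<Rightarrow> nat \<Rightarrow> nat" where
  "prime_pi_ap z q a = card {p::nat. prime p \<and> real p \<le> z \<and> [p = a] (mod q)}"

definition BV_err :: "nat \<Rightarrow> nat \<Rightarrow> real" where
  "BV_err x q = (SUP z\<in>{2..real x}. SUP a\<in>{a. a < q \<and> coprime a q}.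
      \<bar>real (prime_pi_ap z q a) - real (prime_pi z) / real (totient q)\<bar>)"

definition Pset :: "real \<Rightarrow> real \<Rightarrow> real \<Rightarrow> (nat \<Rightarrow> nat) \<Rightarrow> nat set" where
  "Pset E \<delta> y s =
    (let \<Delta> = \<delta>^2 / 24;
         \<Upsilon> = nat \<lceil>exp (y powr (2 + 2*\<Delta>))\<rceil>;
         Q = {p::nat. prime p \<and> y / ln y \<le> real p \<and> real p \<le> y \<and> real (Pplus (p - 1)) \<le> y powr (1 - E)};
         \<kappa> = (\<Prod>p\<in>Q. p^2);
         pstar = Pplus (s (2 * \<Upsilon> * \<kappa>))
     in Q - {pstar})"

end

theory Submission
  imports Defs "HOL-Real_Asymp.Real_Asymp"
begin

(*
  List the 2^|P| products of subsets of P increasingly as d_0 < d_1 < ... and fix m = 4 M^2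
  primes Q in P. All primes of P lie in [y / log y, y], so for large y and b < m a product of
  b + 1 of them exceeds e times a product of b of them. Hence two subsets with the same part
  outside Q whose products differ by a factor at most e meet Q in equally many primes; as a
  subset of Q of given size can be chosen in at most binom(m, m/2) ways, a window [x, e x]
  contains at most h = 2^(|P| - m) binom(m, m/2) <= 2^|P| / (2 M) of the d_i. So d_(i+h) > e d_i,
  and the progressions {d_r, d_(r+h), ..., d_(r+(M-1)h)}, r < h, are 2^|P| / (2 M) disjoint sets
  of M divisors with logarithmic spread > 1. That |P| >= 4 M^2 for large y follows from the
  density hypothesis on primes p with P^+(p - 1) small, combined with Chebyshev's bound
  pi(z) = o(z) to discard the primes below y / log y.
*)

section \<open>Chebyshev's upper bound for the number of primes\<close>

lemma prime_dvd_prod_primes_iff: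
  fixes A :: "nat set"
  assumes "finite A" and "\<And>q. q \<in> A \<Longrightarrow> prime q" and "prime p"
  shows "p dvd \<Prod>A \<longleftrightarrow> p \<in> A"
  using assms prime_dvd_prod_iff[of A p "\<lambda>q. q"] primes_dvd_imp_eq by auto

lemma prod_primes_dvd:
  fixes A :: "nat set"
  assumes "finite A" and "\<And>p. p \<in> A \<Longrightarrow> prime p \<and> p dvd x"
  shows "\<Prod>A dvd x"
  using assms
proof (induction A rule: finite_induct)
  case (insert p A)
  then have "\<not> p dvd \<Prod>A"
    using prime_dvd_prod_primes_iff[of A p] by auto
  then have "coprime p (\<Prod>A)"
    using insert.prems by (simp add: prime_imp_coprime)
  with insert show ?case by (simp add: divides_mult)
qed simp

lemma binomial_odd_central_le: "(2*m+1) choose m \<le> 4^m"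
proof -
  have "2 * ((2*m+1) choose m) = (\<Sum>k\<in>{m, m+1}. (2*m+1) choose k)"
    using binomial_symmetric[of m "2*m+1"] by simp
  also have "\<dots> \<le> (\<Sum>k\<le>2*m+1. (2*m+1) choose k)"
    by (intro sum_mono2) auto
  also have "\<dots> = 2 ^ (2*m+1)"
    by (rule choose_row_sum)
  finally show ?thesis
    by (simp add: power_mult)
qed

lemma prod_primes_between_dvd_binomial:
  "\<Prod>{p. prime p \<and> m+1 < p \<and> p \<le> 2*m+1} dvd (2*m+1) choose m"
proof (rule prod_primes_dvd)
  fix p assume p: "p \<in> {p. prime p \<and> m+1 < p \<and> p \<le> 2*m+1}"
  have "fact (2*m+1) = ((2*m+1) choose m) * (fact m * fact (m+1))"
    using binomial_fact_lemma[of m "2*m+1"] by (simp add: algebra_simps)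
  moreover have "p dvd fact (2*m+1)"
    using p by (intro dvd_fact) (auto dest: prime_gt_1_nat)
  moreover have "\<not> p dvd fact m * fact (m+1)"
    using p by (subst prime_dvd_mult_iff) (auto simp: prime_dvd_fact_iff simp del: fact_Suc)
  ultimately show "prime p \<and> p dvd (2*m+1) choose m"
    using p by (metis mem_Collect_eq prime_dvd_mult_iff)
qed simp

lemma prod_primes_le_odd_le:
  "\<Prod>{p::nat. prime p \<and> p \<le> 2*m+1} \<le> \<Prod>{p. prime p \<and> p \<le> m+1} * 4^m"
proof -
  have "{p::nat. prime p \<and> p \<le> 2*m+1} =
      {p. prime p \<and> p \<le> m+1} \<union> {p. prime p \<and> m+1 < p \<and> p \<le> 2*m+1}"
    by auto
  then have "\<Prod>{p::nat. prime p \<and> p \<le> 2*m+1} =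
      \<Prod>{p. prime p \<and> p \<le> m+1} * \<Prod>{p. prime p \<and> m+1 < p \<and> p \<le> 2*m+1}"
    by (simp only:) (intro prod.union_disjoint, auto)
  also have "\<Prod>{p. prime p \<and> m+1 < p \<and> p \<le> 2*m+1} \<le> (2*m+1) choose m"
    by (intro dvd_imp_le prod_primes_between_dvd_binomial) simp
  also have "\<dots> \<le> 4^m"
    by (rule binomial_odd_central_le)
  finally show ?thesis
    by simp
qed

lemma primorial_le_four_pow: "\<Prod>{p::nat. prime p \<and> p \<le> n} \<le> 4 ^ n"
proof (induction n rule: less_induct)
  case (less n)
  consider "n \<le> 2" | "even n" "n > 2" | m where "n = 2*m+1" "m \<ge> 1"
  proof -
    have "n \<le> 2 \<or> (even n \<and> n > 2) \<or> (\<exists>m. n = 2*m+1 \<and> m \<ge> 1)"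
      by presburger
    then show ?thesis
      using that by blast
  qed
  then show ?case
  proof cases
    case 1
    then have "{p::nat. prime p \<and> p \<le> n} = (if n < 2 then {} else {2})"
      by (auto simp: le_Suc_eq dest: prime_gt_1_nat)
    moreover have "2 \<le> (4::nat) ^ n" if "n \<ge> 1"
      using power_increasing[OF that, of "4::nat"] by simp
    ultimately show ?thesis
      by simp
  next
    case 2
    then have "\<not> prime n"
      using prime_odd_nat[of n] by auto
    then have "{p::nat. prime p \<and> p \<le> n} = {p. prime p \<and> p \<le> n - 1}"
      by (auto simp: le_eq_less_or_eq)
    then have "\<Prod>{p::nat. prime p \<and> p \<le> n} \<le> 4 ^ (n - 1)"
      using less[of "n - 1"] 2 by simp
    also have "\<dots> \<le> 4 ^ n"
      by (intro power_increasing) auto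
    finally show ?thesis .
  next
    case 3
    have "\<Prod>{p::nat. prime p \<and> p \<le> n} \<le> \<Prod>{p. prime p \<and> p \<le> m+1} * 4^m"
      using prod_primes_le_odd_le[of m] 3 by simp
    also have "\<dots> \<le> 4^(m+1) * 4^m"
      using less[of "m+1"] 3 by simp
    also have "\<dots> = 4 ^ n"
      using 3 by (simp flip: power_add)
    finally show ?thesis .
  qed
qed

lemma card_primes_gt_mult_ln_le:
  fixes k n :: nat
  assumes "k \<ge> 2"
  shows "real (card {p. prime p \<and> p \<le> n \<and> k < p}) * ln k \<le> real n * ln 4"
proof -
  define B where "B = {p. prime p \<and> p \<le> n \<and> k < p}"
  have "real k ^ card B = (\<Prod>p\<in>B. real k)"
    by simp
  also have "\<dots> \<le> (\<Prod>p\<in>B. real p)"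
    by (intro prod_mono) (auto simp: B_def)
  also have "\<dots> = real (\<Prod>B)"
    by simp
  also have "\<dots> \<le> real (\<Prod>{p. prime p \<and> p \<le> n})"
  proof -
    have "\<Prod>B dvd \<Prod>{p. prime p \<and> p \<le> n}"
      by (intro prod_dvd_prod_subset) (auto simp: B_def)
    moreover have "\<Prod>{p. prime p \<and> p \<le> n} > 0"
      by (intro prod_pos) (auto dest: prime_gt_0_nat)
    ultimately show ?thesis
      by (metis dvd_imp_le of_nat_le_iff)
  qed
  also have "\<dots> \<le> 4 ^ n"
    by (metis primorial_le_four_pow of_nat_le_iff of_nat_numeral of_nat_power)
  finally have "ln (real k ^ card B) \<le> ln (4 ^ n)"
    using assms by (subst ln_le_cancel_iff) auto
  then show ?thesis
    using assms by (simp add: B_def ln_realpow)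
qed

lemma card_primes_le_bound:
  fixes z :: real and k :: nat
  assumes "k \<ge> 2" and "z \<ge> 0"
  shows "real (card {p::nat. prime p \<and> real p \<le> z}) \<le> real k + ln 4 * z / ln k"
proof -
  define n where "n = nat \<lfloor>z\<rfloor>"
  define A where "A = {p::nat. prime p \<and> p \<le> n}"
  define B where "B = {p. prime p \<and> p \<le> n \<and> k < p}"
  have A_eq: "{p::nat. prime p \<and> real p \<le> z} = A"
    using assms(2) by (auto simp: A_def n_def le_nat_iff le_floor_iff)
  have "{p\<in>A. p \<le> k} \<subseteq> {1..k}"
    by (auto simp: A_def dest: prime_gt_0_nat)
  then have small: "card {p\<in>A. p \<le> k} \<le> k"
    using card_mono[of "{1..k}"] by fastforce
  have "real (card B) * ln k \<le> real n * ln 4"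
    unfolding B_def by (rule card_primes_gt_mult_ln_le[OF assms(1)])
  also have "\<dots> \<le> z * ln 4"
    using assms(2) by (intro mult_right_mono) (auto simp: n_def)
  finally have big: "real (card B) \<le> ln 4 * z / ln k"
    using assms(1) by (simp add: pos_le_divide_eq mult.commute)
  have "card A \<le> card {p\<in>A. p \<le> k} + card B"
    by (rule order.trans[OF card_mono card_Un_le]) (auto simp: A_def B_def)
  then have "real (card A) \<le> real k + real (card B)"
    using small by simp
  then show ?thesis
    unfolding A_eq using big by linarith
qed

lemma eventually_card_primes_le:
  fixes c :: real
  assumes "c > 0"
  shows "\<forall>\<^sub>F z in at_top. real (card {p::nat. prime p \<and> real p \<le> z}) \<le> c * z"
proof -
  define k where "k = nat \<lceil>exp (2 * ln 4 / c)\<rceil> + 2"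
  have "exp (2 * ln 4 / c) \<le> real k"
    unfolding k_def by linarith
  moreover have k: "k \<ge> 2"
    by (simp add: k_def)
  ultimately have "2 * ln 4 / c \<le> ln k"
    by (simp add: ln_ge_iff)
  moreover have "ln (real k) > 0"
    using k by simp
  ultimately have "ln 4 / ln k \<le> c / 2"
    using assms by (simp add: field_simps)
  show ?thesis
    using eventually_ge_at_top[of "max 0 (2 * real k / c)"]
  proof eventually_elim
    case (elim z)
    have "ln 4 * z / ln k \<le> c / 2 * z"
      using mult_right_mono[OF \<open>ln 4 / ln k \<le> c / 2\<close>, of z] elim by simp
    moreover have "real k \<le> c / 2 * z"
      using elim assms by (simp add: field_simps)
    ultimately show ?case
      using card_primes_le_bound[OF k, of z] elim by linarith
  qed
qed

section \<open>Central binomial coefficients\<close>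

lemma central_binomial_Suc:
  "(j+1) * ((2*j+2) choose (j+1)) = 2 * (2*j+1) * ((2*j) choose j)"
proof -
  have Suc_eqs: "Suc (2*j+1) = 2*j+2" "Suc (2*j) = 2*j+1" "Suc j = j+1"
    by simp_all
  have step1: "(j+1) * ((2*j+2) choose (j+1)) = (2*j+2) * ((2*j+1) choose j)"
    using Suc_times_binomial[of j "2*j+1"] unfolding Suc_eqs .
  have step2: "(j+1) * ((2*j+1) choose (j+1)) = (2*j+1) * ((2*j) choose j)"
    using Suc_times_binomial[of j "2*j"] unfolding Suc_eqs .
  have nz: "j + 1 \<noteq> 0"
    by simp
  have sym: "(2*j+1) choose j = (2*j+1) choose (j+1)"
    using binomial_symmetric[of j "2*j+1"] by simp
  have "(j+1) * ((j+1) * ((2*j+2) choose (j+1))) = (2*j+2) * ((j+1) * ((2*j+1) choose (j+1)))"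
    unfolding step1 sym by (simp only: ac_simps)
  also have "\<dots> = (j+1) * (2 * (2*j+1) * ((2*j) choose j))"
    unfolding step2 by (simp only: ac_simps) (simp only: algebra_simps)
  finally show ?thesis
    unfolding mult_left_cancel[OF nz] .
qed

lemma central_binomial_sq_le: "((2*j) choose j)^2 * (2*j+1) \<le> 16^j"
proof (induction j)
  case (Suc j)
  define c where "c = (2*j) choose j"
  define c' where "c' = (2*j+2) choose (j+1)"
  have growth: "(2*j+1) * (2*j+3) \<le> 4 * (j+1)^2"
    by (simp add: power2_eq_square algebra_simps)
  have "(j+1)^2 * (c'^2 * (2*j+3)) = ((j+1) * c')^2 * (2*j+3)"
    by (simp only: power_mult_distrib mult.assoc)
  also have "\<dots> = (2 * (2*j+1) * c)^2 * (2*j+3)"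
    using central_binomial_Suc[of j] unfolding c_def c'_def by simp
  also have "\<dots> = 4 * (c^2 * (2*j+1)) * ((2*j+1) * (2*j+3))"
    by (simp only: power_mult_distrib power2_eq_square ac_simps)
  also have "\<dots> \<le> 4 * 16^j * (4 * (j+1)^2)"
    using Suc.IH unfolding c_def
    by (rule mult_le_mono[OF mult_le_mono2 growth])
  also have "\<dots> = (j+1)^2 * 16^(Suc j)"
    by simp
  finally have "c'^2 * (2*j+3) \<le> 16^(Suc j)"
    by simp
  moreover have "2 * Suc j = 2*j+2" "2 * Suc j + 1 = 2*j+3" "Suc j = j+1"
    by simp_all
  ultimately show ?case
    unfolding c'_def by (simp only:)
qed simp

lemma central_binomial_mult_le: "((4*M^2) choose ((4*M^2) div 2)) * (2*M) \<le> 2^(4*M^2)"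
proof -
  define j where "j = 2*M^2"
  define c where "c = (2*j) choose j"
  have "(c * (2*M))^2 \<le> c^2 * (2*j+1)"
    by (simp add: j_def power_mult_distrib)
  also have "\<dots> \<le> 16^j"
    unfolding c_def by (rule central_binomial_sq_le)
  also have "\<dots> = (2^(2*j))^2"
    by (simp only: power_mult[symmetric] mult.commute[of _ 2] mult.assoc) (simp add: power_mult)
  finally have "c * (2*M) \<le> 2^(2*j)"
    by (rule power2_le_imp_le) simp
  moreover have "4*M^2 = 2*j" "(4*M^2) div 2 = j"
    by (simp_all add: j_def)
  ultimately show ?thesis
    unfolding c_def by (simp only:)
qed

section \<open>Partitions into well-spread progressions\<close>

lemma progression_index_lt:
  fixes r j h M :: nat
  assumes "r < h" and "j < M"
  shows "r + j*h < M*h"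
proof -
  have "r + j*h < (j+1)*h"
    using assms by simp
  also have "\<dots> \<le> M*h"
    using assms by (intro mult_right_mono) auto
  finally show ?thesis .
qed

lemma partition_on_progressions:
  fixes d :: "nat \<Rightarrow> 'a" and M h :: nat
  assumes inj: "inj_on d {..<M*h}" and "M \<ge> 1"
  defines "T \<equiv> \<lambda>r. (\<lambda>j. d (r + j*h)) ` {..<M}"
  shows "partition_on (\<Union>(T ` {..<h})) (T ` {..<h})"
    and "card (T ` {..<h}) = h"
    and "\<And>r. r < h \<Longrightarrow> card (T r) = M"
proof -
  have index_eq: "r = r' \<and> j = j'"
    if "r < h" "r' < h" "j < M" "j' < M" "d (r + j*h) = d (r' + j'*h)" for r r' j j'
  proof -
    have "r + j*h = r' + j'*h"
      using inj_onD[OF inj] that progression_index_lt by blast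
    then have "(r + j*h) mod h = (r' + j'*h) mod h" "(r + j*h) div h = (r' + j'*h) div h"
      by simp_all
    then show ?thesis
      using that by simp
  qed
  have start: "d r \<in> T r" for r
    using \<open>M \<ge> 1\<close> by (auto simp: T_def intro!: image_eqI[where x=0])
  have same_class: "r = r'" if "r < h" "r' < h" "x \<in> T r" "x \<in> T r'" for r r' x
    using that index_eq by (auto simp: T_def)
  have "{} \<notin> T ` {..<h}"
    using start by (metis empty_iff imageE)
  then show "partition_on (\<Union>(T ` {..<h})) (T ` {..<h})"
    using same_class by (auto simp: partition_on_def disjoint_def)
  have "inj_on T {..<h}"
    using same_class start by (intro inj_onI) (metis lessThan_iff)
  then show "card (T ` {..<h}) = h"
    by (simp add: card_image)
  show "card (T r) = M" if "r < h" for r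
  proof -
    have "inj_on (\<lambda>j. d (r + j*h)) {..<M}"
      using index_eq that by (intro inj_onI) blast
    then show ?thesis
      by (simp add: T_def card_image)
  qed
qed

lemma log_spread_gt_ln_if_ratio_gt:
  fixes T :: "nat set" and c :: real
  assumes "c > 0" and "0 \<notin> T" and ratio: "\<And>a b. a \<in> T \<Longrightarrow> b \<in> T \<Longrightarrow> a < b \<Longrightarrow> c * real a < real b"
  shows "log_spread_gt T (ln c)"
  unfolding log_spread_gt_def
proof (intro ballI impI)
  have gap: "ln c < ln (real b) - ln (real a)" if "a \<in> T" "b \<in> T" "a < b" for a b
  proof -
    have "a > 0"
      using that(1) \<open>0 \<notin> T\<close> by (metis gr0I)
    then have "ln (c * real a) < ln (real b)"
      using ratio[OF that] \<open>c > 0\<close> \<open>a < b\<close> by (subst ln_less_cancel_iff) auto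
    then show ?thesis
      using \<open>c > 0\<close> \<open>a > 0\<close> by (simp add: ln_mult)
  qed
  fix s1 s2 assume "s1 \<in> T" "s2 \<in> T" "s1 \<noteq> s2"
  then consider "s1 < s2" | "s2 < s1"
    by linarith
  then show "\<bar>ln (real s1) - ln (real s2)\<bar> > ln c"
  proof cases
    case 1
    then show ?thesis
      using gap[OF \<open>s1 \<in> T\<close> \<open>s2 \<in> T\<close>] by linarith
  next
    case 2
    then show ?thesis
      using gap[OF \<open>s2 \<in> T\<close> \<open>s1 \<in> T\<close>] by linarith
  qed
qed

lemma sorted_list_of_set_gap:
  fixes D :: "nat set" and c :: real and h k l :: nat
  assumes "finite D" and "c \<ge> 0" and "k + h \<le> l" and "l < card D"
    and close: "\<forall>W\<subseteq>D. (\<forall>a\<in>W. \<forall>b\<in>W. real a \<le> c * real b) \<longrightarrow> card W \<le> h"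
  defines "d \<equiv> (!) (sorted_list_of_set D)"
  shows "c * real (d k) < real (d l)"
proof (rule ccontr)
  assume contra: "\<not> c * real (d k) < real (d l)"
  have mono: "d i \<le> d j" if "i \<le> j" "j < card D" for i j
    using that sorted_nth_mono[OF sorted_sorted_list_of_set, of i j] by (simp add: d_def)
  have "inj_on d {..<card D}"
    using \<open>finite D\<close> by (intro inj_onI) (simp add: d_def nth_eq_iff_index_eq)
  then have window_card: "card (d ` {k..l}) = l - k + 1"
    using \<open>l < card D\<close> \<open>k + h \<le> l\<close> by (subst card_image) (auto intro: inj_on_subset)
  have "d ` {k..l} \<subseteq> D"
    using \<open>finite D\<close> \<open>l < card D\<close> nth_mem[of _ "sorted_list_of_set D"] by (auto simp: d_def)
  moreover have "\<forall>a\<in>d ` {k..l}. \<forall>b\<in>d ` {k..l}. real a \<le> c * real b"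
  proof (intro ballI)
    fix a b assume "a \<in> d ` {k..l}" "b \<in> d ` {k..l}"
    then obtain i j where "i \<in> {k..l}" "j \<in> {k..l}" "a = d i" "b = d j"
      by blast
    then have "real a \<le> real (d l)" "real (d k) \<le> real b"
      using mono \<open>l < card D\<close> by auto
    then show "real a \<le> c * real b"
      using contra \<open>c \<ge> 0\<close> mult_left_mono[of "real (d k)" "real b" c] by linarith
  qed
  ultimately have "card (d ` {k..l}) \<le> h"
    using close by blast
  then show False
    using window_card \<open>k + h \<le> l\<close> by simp
qed

lemma exists_partition_log_spread:
  fixes D :: "nat set" and c :: real and M h :: nat
  assumes "finite D" and "0 \<notin> D" and "c > 0" and "M \<ge> 1" and "M * h \<le> card D"
    and close: "\<forall>W\<subseteq>D. (\<forall>a\<in>W. \<forall>b\<in>W. real a \<le> c * real b) \<longrightarrow> card W \<le> h"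
  shows "\<exists>S F. S \<subseteq> D \<and> partition_on S F \<and> card F = h \<and>
           (\<forall>T\<in>F. card T = M \<and> log_spread_gt T (ln c))"
proof -
  define d where "d = (!) (sorted_list_of_set D)"
  define T where "T = (\<lambda>r. (\<lambda>j. d (r + j*h)) ` {..<M})"
  have in_D: "d i \<in> D" if "i < card D" for i
    using that \<open>finite D\<close> nth_mem[of i "sorted_list_of_set D"] by (simp add: d_def)
  have mono: "d i \<le> d j" if "i \<le> j" "j < card D" for i j
    using that sorted_nth_mono[OF sorted_sorted_list_of_set, of i j] by (simp add: d_def)
  have "inj_on d {..<card D}"
    using \<open>finite D\<close> by (intro inj_onI) (simp add: d_def nth_eq_iff_index_eq)
  then have "inj_on d {..<M*h}"
    by (rule inj_on_subset) (use \<open>M * h \<le> card D\<close> in auto)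
  note progressions = partition_on_progressions[OF this \<open>M \<ge> 1\<close>, folded T_def]
  have index_lt: "r + j*h < card D" if "r < h" "j < M" for r j
    using progression_index_lt[OF that] \<open>M * h \<le> card D\<close> by linarith
  have T_sub: "T r \<subseteq> D" if "r < h" for r
    using in_D index_lt that by (auto simp: T_def)
  have spread: "log_spread_gt (T r) (ln c)" if "r < h" for r
  proof (rule log_spread_gt_ln_if_ratio_gt[OF \<open>c > 0\<close>])
    show "0 \<notin> T r"
      using T_sub[OF that] \<open>0 \<notin> D\<close> by blast
    fix a b assume "a \<in> T r" "b \<in> T r" "a < b"
    then obtain j j' where "j < M" "j' < M" and ab: "a = d (r + j*h)" "b = d (r + j'*h)"
      by (auto simp: T_def)
    then have "j < j'"
      using mono[of "r + j'*h" "r + j*h"] index_lt[OF that] \<open>a < b\<close> by (metis add_le_cancel_left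
          mult_le_mono1 not_le)
    then have "r + j*h + h \<le> r + j'*h"
      using mult_le_mono1[of "j+1" j' h] by simp
    then show "c * real a < real b"
      unfolding ab d_def using sorted_list_of_set_gap[OF \<open>finite D\<close> _ _ _ close] \<open>c > 0\<close>
        index_lt[OF that \<open>j' < M\<close>] by simp
  qed
  show ?thesis
  proof (intro exI conjI)
    show "\<Union>(T ` {..<h}) \<subseteq> D"
      using T_sub by blast
  qed (use progressions spread in \<open>auto simp: T_def\<close>)
qed

section \<open>Products of primes from a short interval\<close>

lemma inj_on_prod_Pow_primes:
  fixes P :: "nat set"
  assumes "finite P" and "\<forall>p\<in>P. prime p"
  shows "inj_on (\<lambda>X. \<Prod>X) (Pow P)"
proof (rule inj_onI)
  fix X Y assume X: "X \<in> Pow P" and Y: "Y \<in> Pow P" and eq: "\<Prod>X = \<Prod>Y"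
  have fin: "finite X" "finite Y"
    using X Y assms(1) by (auto intro: finite_subset)
  have primes: "\<And>q. q \<in> X \<Longrightarrow> prime q" "\<And>q. q \<in> Y \<Longrightarrow> prime q"
    using X Y assms(2) by auto
  have "p \<in> X \<longleftrightarrow> p \<in> Y" if "p \<in> P" for p
  proof -
    have "prime p"
      using assms(2) that by blast
    then show ?thesis
      using prime_dvd_prod_primes_iff[OF fin(1) primes(1)] prime_dvd_prod_primes_iff[OF fin(2) primes(2)] eq
      by simp
  qed
  then show "X = Y"
    using X Y by blast
qed

lemma prod_inter_le_if_prod_le:
  fixes X1 X2 Q :: "nat set" and c :: real
  assumes "finite X1" and "finite X2" and "0 \<notin> X1" and same_outside: "X1 - Q = X2 - Q"
    and close: "real (\<Prod>X1) \<le> c * real (\<Prod>X2)"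
  shows "real (\<Prod>(X1 \<inter> Q)) \<le> c * real (\<Prod>(X2 \<inter> Q))"
proof -
  have pos: "real (\<Prod>(X1 - Q)) > 0"
    using \<open>finite X1\<close> \<open>0 \<notin> X1\<close> by (simp only: of_nat_0_less_iff) (intro prod_pos, auto intro: gr0I)
  have "\<Prod>X1 = \<Prod>(X1 - Q) * \<Prod>(X1 \<inter> Q)" "\<Prod>X2 = \<Prod>(X1 - Q) * \<Prod>(X2 \<inter> Q)"
    using prod.Int_Diff[OF \<open>finite X1\<close>, of "\<lambda>p. p" Q] prod.Int_Diff[OF \<open>finite X2\<close>, of "\<lambda>p. p" Q]
      same_outside by (simp_all add: mult.commute)
  then have "real (\<Prod>(X1 - Q)) * real (\<Prod>(X1 \<inter> Q)) \<le> real (\<Prod>(X1 - Q)) * (c * real (\<Prod>(X2 \<inter> Q)))"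
    using close by (simp only: of_nat_mult ac_simps)
  then show ?thesis
    unfolding mult_le_cancel_left_pos[OF pos] .
qed

lemma card_inter_le_if_prod_le:
  fixes P Q X1 X2 :: "nat set" and c L y :: real
  assumes "finite P" and "Q \<subseteq> P" and bounds: "\<forall>p\<in>P. L \<le> real p \<and> real p \<le> y"
    and "L \<ge> 1" and "c > 0" and gap: "\<forall>b<card Q. c * y^b < L^(b+1)"
    and "X1 \<subseteq> P" and "X2 \<subseteq> P" and same_outside: "X1 - Q = X2 - Q"
    and close: "real (\<Prod>X1) \<le> c * real (\<Prod>X2)"
  shows "card (X1 \<inter> Q) \<le> card (X2 \<inter> Q)"
proof (rule ccontr)
  define a where "a = card (X1 \<inter> Q)"
  define b where "b = card (X2 \<inter> Q)"
  assume "\<not> card (X1 \<inter> Q) \<le> card (X2 \<inter> Q)"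
  then have "b < a"
    by (simp add: a_def b_def)
  have fin: "finite X1" "finite X2" "finite Q"
    using assms by (auto intro: finite_subset)
  then have "a \<le> card Q"
    by (simp add: a_def card_mono)
  have "0 \<notin> X1"
    using bounds \<open>X1 \<subseteq> P\<close> \<open>L \<ge> 1\<close> by force
  have "L^(b+1) \<le> L^a"
    using \<open>L \<ge> 1\<close> \<open>b < a\<close> by (intro power_increasing) auto
  also have "\<dots> = (\<Prod>p\<in>X1 \<inter> Q. L)"
    by (simp add: a_def)
  also have "\<dots> \<le> (\<Prod>p\<in>X1 \<inter> Q. real p)"
    using bounds \<open>X1 \<subseteq> P\<close> \<open>L \<ge> 1\<close> by (intro prod_mono) auto
  also have "\<dots> \<le> c * (\<Prod>p\<in>X2 \<inter> Q. real p)"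
    using prod_inter_le_if_prod_le[OF fin(1,2) \<open>0 \<notin> X1\<close> same_outside close] by simp
  also have "\<dots> \<le> c * (\<Prod>p\<in>X2 \<inter> Q. y)"
    using bounds \<open>X2 \<subseteq> P\<close> \<open>c > 0\<close> by (intro mult_left_mono prod_mono) auto
  also have "\<dots> = c * y^b"
    by (simp add: b_def)
  finally have "L^(b+1) \<le> c * y^b" .
  moreover have "c * y^b < L^(b+1)"
    using gap \<open>b < a\<close> \<open>a \<le> card Q\<close> by simp
  ultimately show False
    by simp
qed

lemma card_prod_close_family_fixed_outside_le:
  fixes P Q A :: "nat set" and \<S> :: "nat set set" and c L y :: real
  assumes "finite P" and "Q \<subseteq> P" and bounds: "\<forall>p\<in>P. L \<le> real p \<and> real p \<le> y"
    and "L \<ge> 1" and "c > 0" and gap: "\<forall>b<card Q. c * y^b < L^(b+1)"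
    and "\<S> \<subseteq> Pow P" and close: "\<And>X1 X2. X1 \<in> \<S> \<Longrightarrow> X2 \<in> \<S> \<Longrightarrow> real (\<Prod>X1) \<le> c * real (\<Prod>X2)"
    and outside: "\<And>X. X \<in> \<S> \<Longrightarrow> X - Q = A"
  shows "card \<S> \<le> card Q choose (card Q div 2)"
proof (cases "\<S> = {}")
  case False
  then obtain X0 where "X0 \<in> \<S>"
    by blast
  have same_card: "card (X \<inter> Q) = card (X0 \<inter> Q)" if "X \<in> \<S>" for X
  proof -
    have "X \<subseteq> P" "X0 \<subseteq> P" and "X - Q = X0 - Q"
      using that \<open>X0 \<in> \<S>\<close> \<open>\<S> \<subseteq> Pow P\<close> outside by auto
    show ?thesis
      using card_inter_le_if_prod_le[OF assms(1-6) \<open>X \<subseteq> P\<close> \<open>X0 \<subseteq> P\<close> \<open>X - Q = X0 - Q\<close>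
            close[OF that \<open>X0 \<in> \<S>\<close>]]
        card_inter_le_if_prod_le[OF assms(1-6) \<open>X0 \<subseteq> P\<close> \<open>X \<subseteq> P\<close> \<open>X - Q = X0 - Q\<close>[symmetric]
            close[OF \<open>X0 \<in> \<S>\<close> that]]
      by (rule antisym)
  qed
  have "inj_on (\<lambda>X. X \<inter> Q) \<S>"
  proof (rule inj_onI)
    fix X Y assume "X \<in> \<S>" "Y \<in> \<S>" "X \<inter> Q = Y \<inter> Q"
    then show "X = Y"
      using outside[of X] outside[of Y] by blast
  qed
  then have "card \<S> = card ((\<lambda>X. X \<inter> Q) ` \<S>)"
    by (simp add: card_image)
  also have "\<dots> \<le> card {B. B \<subseteq> Q \<and> card B = card (X0 \<inter> Q)}"
    using same_card finite_subset[OF assms(2,1)]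
    by (intro card_mono) (auto intro: rev_finite_subset[of "Pow Q"])
  also have "\<dots> = card Q choose card (X0 \<inter> Q)"
    using assms(1,2) finite_subset by (intro n_subsets) blast
  also have "\<dots> \<le> card Q choose (card Q div 2)"
    by (rule binomial_maximum)
  finally show ?thesis .
qed simp

lemma card_prod_close_family_le:
  fixes P :: "nat set" and \<S> :: "nat set set" and c L y :: real and m :: nat
  assumes "finite P" and bounds: "\<forall>p\<in>P. L \<le> real p \<and> real p \<le> y"
    and "L \<ge> 1" and "c > 0" and "m \<le> card P" and gap: "\<forall>b<m. c * y^b < L^(b+1)"
    and "\<S> \<subseteq> Pow P" and close: "\<And>X1 X2. X1 \<in> \<S> \<Longrightarrow> X2 \<in> \<S> \<Longrightarrow> real (\<Prod>X1) \<le> c * real (\<Prod>X2)"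
  shows "card \<S> \<le> 2^(card P - m) * (m choose (m div 2))"
proof -
  obtain Q where "Q \<subseteq> P" and "card Q = m"
    using obtain_subset_with_card_n[OF \<open>m \<le> card P\<close>] by blast
  define fibre where "fibre A = {X \<in> \<S>. X - Q = A}" for A
  have "\<S> = (\<Union>A\<in>Pow (P - Q). fibre A)"
    using \<open>\<S> \<subseteq> Pow P\<close> by (auto simp: fibre_def)
  also have "card \<dots> \<le> (\<Sum>A\<in>Pow (P - Q). card (fibre A))"
    using \<open>finite P\<close> by (intro card_UN_le) simp
  also have "\<dots> \<le> (\<Sum>A\<in>Pow (P - Q). m choose (m div 2))"
  proof (intro sum_mono)
    fix A
    have "fibre A \<subseteq> Pow P"
      using \<open>\<S> \<subseteq> Pow P\<close> by (auto simp: fibre_def)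
    have "card (fibre A) \<le> card Q choose (card Q div 2)"
    proof (rule card_prod_close_family_fixed_outside_le[OF \<open>finite P\<close> \<open>Q \<subseteq> P\<close> bounds \<open>L \<ge> 1\<close> \<open>c > 0\<close>])
      show "\<forall>b<card Q. c * y^b < L^(b+1)"
        using gap \<open>card Q = m\<close> by simp
      show "real (\<Prod>X1) \<le> c * real (\<Prod>X2)" if "X1 \<in> fibre A" "X2 \<in> fibre A" for X1 X2
        using close that by (simp add: fibre_def)
      show "X - Q = A" if "X \<in> fibre A" for X
        using that by (simp add: fibre_def)
    qed (use \<open>fibre A \<subseteq> Pow P\<close> in simp)
    then show "card (fibre A) \<le> m choose (m div 2)"
      using \<open>card Q = m\<close> by simp
  qed
  also have "\<dots> = 2^(card P - m) * (m choose (m div 2))"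
    using \<open>finite P\<close> \<open>Q \<subseteq> P\<close> \<open>card Q = m\<close>
    by (simp add: card_Pow card_Diff_subset finite_subset)
  finally show ?thesis .
qed

lemma card_prod_Pow_primes:
  fixes P :: "nat set"
  assumes "finite P" and "\<forall>p\<in>P. prime p"
  shows "card ((\<lambda>X. \<Prod>X) ` Pow P) = 2 ^ card P"
  using inj_on_prod_Pow_primes[OF assms] assms(1) by (simp add: card_image card_Pow)

lemma zero_notin_prod_Pow_primes:
  fixes P :: "nat set"
  assumes "finite P" and "\<forall>p\<in>P. prime p"
  shows "0 \<notin> (\<lambda>X. \<Prod>X) ` Pow P"
proof
  assume "0 \<in> (\<lambda>X. \<Prod>X) ` Pow P"
  then obtain X where "X \<subseteq> P" and "\<Prod>X = 0"
    by auto
  moreover have "finite X"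
    using assms(1) \<open>X \<subseteq> P\<close> by (rule finite_subset[rotated])
  ultimately show False
    using assms(2) by (metis not_prime_0 prod_zero_iff subsetD)
qed

lemma prod_Pow_subset_DS:
  fixes P :: "nat set"
  assumes "finite P"
  shows "(\<lambda>X. \<Prod>X) ` Pow P \<subseteq> DS P"
  using assms by (auto simp: DS_def intro: prod_dvd_prod_subset)

lemma card_close_prod_Pow_le:
  fixes P W :: "nat set" and c L y :: real and m :: nat
  assumes "finite P" and primes: "\<forall>p\<in>P. prime p" and bounds: "\<forall>p\<in>P. L \<le> real p \<and> real p \<le> y"
    and "L \<ge> 1" and "c > 0" and "m \<le> card P" and gap: "\<forall>b<m. c * y^b < L^(b+1)"
    and "W \<subseteq> (\<lambda>X. \<Prod>X) ` Pow P" and close: "\<forall>a\<in>W. \<forall>b\<in>W. real a \<le> c * real b"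
  shows "card W \<le> 2^(card P - m) * (m choose (m div 2))"
proof -
  define \<S> where "\<S> = {X \<in> Pow P. \<Prod>X \<in> W}"
  have "W = (\<lambda>X. \<Prod>X) ` \<S>"
    using \<open>W \<subseteq> (\<lambda>X. \<Prod>X) ` Pow P\<close> by (auto simp: \<S>_def)
  moreover have "inj_on (\<lambda>X. \<Prod>X) \<S>"
    using inj_on_prod_Pow_primes[OF \<open>finite P\<close> primes] by (rule inj_on_subset) (auto simp: \<S>_def)
  ultimately have "card W = card \<S>"
    by (simp add: card_image)
  also have "\<dots> \<le> 2^(card P - m) * (m choose (m div 2))"
  proof (rule card_prod_close_family_le[OF \<open>finite P\<close> bounds \<open>L \<ge> 1\<close> \<open>c > 0\<close> \<open>m \<le> card P\<close> gap])
    show "\<S> \<subseteq> Pow P"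
      by (auto simp: \<S>_def)
    show "real (\<Prod>X1) \<le> c * real (\<Prod>X2)" if "X1 \<in> \<S>" "X2 \<in> \<S>" for X1 X2
    proof -
      have "\<Prod>X1 \<in> W" "\<Prod>X2 \<in> W"
        using that by (simp_all add: \<S>_def)
      then show ?thesis
        using close by blast
    qed
  qed
  finally show ?thesis .
qed

lemma pow2_central_binomial_le_div:
  fixes M k n :: nat
  assumes "M = 2^k" and "4 * M^2 \<le> n"
  shows "2 * M dvd 2^n"
    and "2^(n - 4 * M^2) * ((4 * M^2) choose (4 * M^2 div 2)) \<le> 2^n div (2 * M)"
proof -
  define m where "m = 4 * M^2"
  have "m \<le> n"
    using assms(2) by (simp add: m_def)
  have "Suc k \<le> M"
    using \<open>M = 2^k\<close> by (simp add: Suc_leI)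
  also have "\<dots> \<le> m"
    using le_square[of M] by (simp add: m_def power2_eq_square)
  finally show "2 * M dvd 2^n"
    using \<open>M = 2^k\<close> \<open>m \<le> n\<close> le_imp_power_dvd[of "Suc k" n 2] by simp
  have "2^(n - m) * (m choose (m div 2)) * (2 * M) \<le> 2^(n - m) * 2^m"
    using central_binomial_mult_le[of M] by (simp add: m_def mult.assoc)
  also have "\<dots> = 2^n"
    using \<open>m \<le> n\<close> by (simp flip: power_add)
  finally show "2^(n - 4 * M^2) * ((4 * M^2) choose (4 * M^2 div 2)) \<le> 2^n div (2 * M)"
    using \<open>M = 2^k\<close> by (simp add: m_def less_eq_div_iff_mult_less_eq)
qed

lemma exists_spread_partition_of_divisors:
  fixes P :: "nat set" and L y :: real and M k :: nat
  assumes "finite P" and primes: "\<forall>p\<in>P. prime p" and bounds: "\<forall>p\<in>P. L \<le> real p \<and> real p \<le> y"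
    and "L \<ge> 1" and "M = 2^k" and "4 * M^2 \<le> card P"
    and gap: "\<forall>b<4 * M^2. exp 1 * y^b < L^(b+1)"
  shows "\<exists>S F. S \<subseteq> DS P \<and> partition_on S F \<and> real (card F) = 2 ^ card P / (2 * real M) \<and>
           (\<forall>T\<in>F. card T = M \<and> log_spread_gt T 1)"
proof -
  define n where "n = card P"
  define h :: nat where "h = 2^n div (2 * M)"
  define D where "D = (\<lambda>X. \<Prod>X) ` Pow P"
  have h_M: "h * (2 * M) = 2^n"
    using pow2_central_binomial_le_div(1)[OF \<open>M = 2^k\<close> \<open>4 * M^2 \<le> card P\<close>] by (simp add: h_def n_def)
  have C_h: "2^(n - 4 * M^2) * ((4 * M^2) choose (4 * M^2 div 2)) \<le> h"
    using pow2_central_binomial_le_div(2)[OF \<open>M = 2^k\<close> \<open>4 * M^2 \<le> card P\<close>] by (simp add: h_def n_def)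
  have "finite D" "card D = 2^n" "0 \<notin> D"
    using card_prod_Pow_primes[OF \<open>finite P\<close> primes] zero_notin_prod_Pow_primes[OF \<open>finite P\<close> primes]
      \<open>finite P\<close> by (simp_all add: D_def n_def)
  have "M \<ge> 1"
    using \<open>M = 2^k\<close> by simp
  have "M * h \<le> 2 * (M * h)"
    by simp
  also have "\<dots> = card D"
    using h_M \<open>card D = 2^n\<close> by (simp add: ac_simps)
  finally have "M * h \<le> card D" .
  have close: "\<forall>W\<subseteq>D. (\<forall>a\<in>W. \<forall>b\<in>W. real a \<le> exp 1 * real b) \<longrightarrow> card W \<le> h"
  proof (intro allI impI)
    fix W assume "W \<subseteq> D" and "\<forall>a\<in>W. \<forall>b\<in>W. real a \<le> exp 1 * real b"
    then have "card W \<le> 2^(n - 4 * M^2) * ((4 * M^2) choose (4 * M^2 div 2))"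
      using card_close_prod_Pow_le[OF \<open>finite P\<close> primes bounds \<open>L \<ge> 1\<close> exp_gt_zero[of 1] \<open>4 * M^2 \<le> card P\<close> gap]
      by (simp add: D_def n_def)
    then show "card W \<le> h"
      using C_h by linarith
  qed
  obtain S F where "S \<subseteq> D" "partition_on S F" "card F = h" "\<forall>T\<in>F. card T = M \<and> log_spread_gt T 1"
    using exists_partition_log_spread[OF \<open>finite D\<close> \<open>0 \<notin> D\<close> exp_gt_zero \<open>M \<ge> 1\<close> \<open>M * h \<le> card D\<close> close]
    by auto
  moreover have "S \<subseteq> DS P"
    using \<open>S \<subseteq> D\<close> prod_Pow_subset_DS[OF \<open>finite P\<close>] by (simp add: D_def)
  moreover have "real (card F) = 2 ^ card P / (2 * real M)"
  proof -
    have "real h * (2 * real M) = 2 ^ n"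
      using h_M by (metis of_nat_mult of_nat_numeral of_nat_power)
    then show ?thesis
      using \<open>card F = h\<close> \<open>M \<ge> 1\<close> by (simp add: n_def field_simps)
  qed
  ultimately show ?thesis
    by blast
qed

section \<open>The primes of the set P\<close>

lemma div_ln_at_top: "filterlim (\<lambda>y::real. y / ln y) at_top at_top"
  by real_asymp

lemma finite_nat_le_real: "finite {p::nat. real p \<le> z}"
  by (rule finite_subset[of _ "{..nat \<lfloor>z\<rfloor>}"]) (auto intro: le_nat_floor)

lemma eventually_exp_mult_power_lt:
  fixes m :: nat
  shows "\<forall>\<^sub>F y::real in at_top. \<forall>b<m. exp 1 * y^b < (y / ln y)^(b+1)"
proof -
  have "((\<lambda>y::real. ln y ^ m / exp (ln y)) \<longlongrightarrow> 0) at_top"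
    using filterlim_compose[OF tendsto_power_div_exp_0 ln_at_top] by (simp add: o_def)
  moreover have "(0::real) < 1 / exp 1"
    by simp
  ultimately have "\<forall>\<^sub>F y::real in at_top. ln y ^ m / exp (ln y) < 1 / exp 1"
    by (rule order_tendstoD(2))
  then show ?thesis
    using eventually_ge_at_top[of "exp 1"]
  proof eventually_elim
    case (elim y)
    have "y > 0" "ln y \<ge> 1"
      using elim(2) by (auto simp: ln_ge_iff less_le_trans[OF exp_gt_zero])
    then have "ln y ^ m / y < 1 / exp 1"
      using elim(1) by simp
    then have ln_m: "exp 1 * ln y ^ m < y"
      using \<open>y > 0\<close> by (simp add: less_divide_eq mult.commute)
    show ?case
    proof (intro allI impI)
      fix b assume "b < m"
      have "exp 1 * ln y ^ (b+1) \<le> exp 1 * ln y ^ m"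
        using \<open>ln y \<ge> 1\<close> \<open>b < m\<close> by (intro mult_left_mono power_increasing) auto
      then have "exp 1 * ln y ^ (b+1) < y"
        using ln_m by linarith
      then have "exp 1 * ln y ^ (b+1) * y^b < y * y^b"
        using \<open>y > 0\<close> by (intro mult_strict_right_mono) auto
      then have "exp 1 * y^b * ln y ^ (b+1) < y ^ (b+1)"
        by (simp add: ac_simps)
      moreover have "ln y ^ (b+1) > 0"
        using \<open>ln y \<ge> 1\<close> by simp
      ultimately show "exp 1 * y^b < (y / ln y)^(b+1)"
        by (simp add: power_divide pos_less_divide_eq)
    qed
  qed
qed

definition smooth_shifted_primes :: "real \<Rightarrow> real \<Rightarrow> nat set" where
  "smooth_shifted_primes E y =
     {p. prime p \<and> y / ln y \<le> real p \<and> real p \<le> y \<and> real (Pplus (p - 1)) \<le> y powr (1 - E)}"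

lemma Pset_eq_smooth_shifted_primes_minus: "\<exists>q. Pset E \<delta> y s = smooth_shifted_primes E y - {q}"
  unfolding Pset_def smooth_shifted_primes_def Let_def by blast

lemma finite_smooth_shifted_primes: "finite (smooth_shifted_primes E y)"
  by (rule rev_finite_subset[OF finite_nat_le_real]) (auto simp: smooth_shifted_primes_def)

lemma eventually_card_smooth_shifted_primes_ge:
  fixes E \<gamma> :: real and n :: nat
  assumes "\<gamma> > 0"
    and hyp: "\<forall>\<^sub>F x in at_top.
        real (card {p::nat. prime p \<and> real p \<le> x \<and> real (Pplus (p - 1)) \<le> x powr (1 - E)}) \<ge> \<gamma> * x / ln x"
  shows "\<forall>\<^sub>F y in at_top. n \<le> card (smooth_shifted_primes E y)"
proof -
  have "\<gamma>/2 > 0"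
    using \<open>\<gamma> > 0\<close> by simp
  have few_small: "\<forall>\<^sub>F y in at_top. real (card {p::nat. prime p \<and> real p \<le> y / ln y}) \<le> \<gamma>/2 * (y / ln y)"
    using eventually_compose_filterlim[OF eventually_card_primes_le[OF \<open>\<gamma>/2 > 0\<close>] div_ln_at_top]
    by simp
  have "\<forall>\<^sub>F y in at_top. 2 * real n / \<gamma> \<le> y / ln y"
    using div_ln_at_top by (simp add: filterlim_at_top)
  then show ?thesis
    using hyp few_small
  proof eventually_elim
    case (elim y)
    let ?G = "{p::nat. prime p \<and> real p \<le> y \<and> real (Pplus (p - 1)) \<le> y powr (1 - E)}"
    let ?S = "{p::nat. prime p \<and> real p \<le> y / ln y}"
    have "?G \<subseteq> smooth_shifted_primes E y \<union> ?S"
      by (auto simp: smooth_shifted_primes_def)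
    then have "card ?G \<le> card (smooth_shifted_primes E y \<union> ?S)"
      by (rule card_mono[rotated])
        (use finite_smooth_shifted_primes rev_finite_subset[OF finite_nat_le_real, of ?S] in auto)
    also have "\<dots> \<le> card (smooth_shifted_primes E y) + card ?S"
      by (rule card_Un_le)
    finally have "card ?G \<le> card (smooth_shifted_primes E y) + card ?S" .
    then have "\<gamma> * y / ln y \<le> real (card (smooth_shifted_primes E y)) + \<gamma>/2 * (y / ln y)"
      using elim by linarith
    moreover have "real n \<le> \<gamma>/2 * (y / ln y)"
      using elim(1) \<open>\<gamma> > 0\<close> by (simp add: field_simps)
    ultimately have "real n \<le> real (card (smooth_shifted_primes E y))"
      by simp
    then show ?case
      by simp
  qed
qed

lemma exists_spread_partition_of_Pset:
  fixes E \<delta> y :: real and s :: "nat \<Rightarrow> nat" and M k :: nat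
  assumes "M = 2^k" and "4 * M^2 + 1 \<le> card (smooth_shifted_primes E y)" and "1 \<le> y / ln y"
    and "\<forall>b<4 * M^2. exp 1 * y^b < (y / ln y)^(b+1)"
  shows "\<exists>S F. S \<subseteq> DS (Pset E \<delta> y s) \<and> partition_on S F \<and>
           real (card F) = 2 ^ card (Pset E \<delta> y s) / (2 * real M) \<and>
           (\<forall>T\<in>F. card T = M \<and> log_spread_gt T 1)"
proof (rule exists_spread_partition_of_divisors[OF _ _ _ assms(3,1) _ assms(4)])
  obtain q where Pset_eq: "Pset E \<delta> y s = smooth_shifted_primes E y - {q}"
    using Pset_eq_smooth_shifted_primes_minus by blast
  show "finite (Pset E \<delta> y s)"
    using finite_smooth_shifted_primes by (simp add: Pset_eq)
  show "\<forall>p\<in>Pset E \<delta> y s. prime p" "\<forall>p\<in>Pset E \<delta> y s. y / ln y \<le> real p \<and> real p \<le> y"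
    by (auto simp: Pset_eq smooth_shifted_primes_def)
  show "4 * M^2 \<le> card (Pset E \<delta> y s)"
    using assms(2) by (simp add: Pset_eq card_Diff_singleton_if) linarith
qed

theorem lemma2:
  fixes E \<gamma> \<delta> :: real and M :: nat
  assumes E_pos: "E > 0" and gamma_pos: "\<gamma> > 0" and delta_pos: "\<delta> > 0"
    and hypE: "\<forall>\<^sub>F x in at_top.
        real (card {p::nat. prime p \<and> real p \<le> x \<and> real (Pplus (p - 1)) \<le> x powr (1 - E)})
          \<ge> \<gamma> * x / ln x"
    and M_pow2: "\<exists>k. M = 2 ^ k"
  shows "\<exists>Y. \<forall>C5 C6 :: real. \<forall>s :: nat \<Rightarrow> nat.
           C5 > 0 \<longrightarrow> C6 > 0 \<longrightarrow>
           (\<forall>x::nat. x \<ge> 1 \<longrightarrow> sqrt (ln (real x)) \<le> real (s x) \<and> real (s x) \<le> exp (sqrt (ln (real x)))) \<longrightarrow>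
           (\<forall>x::nat. x \<ge> 1 \<longrightarrow>
              (\<Sum>q\<in>{q::nat. 1 \<le> q \<and> real q \<le> real x powr (2/5) \<and> \<not> s x dvd q}. BV_err x q)
                \<le> C5 * real x * exp (- C6 * sqrt (ln (real x)))) \<longrightarrow>
           (\<forall>y::real. y \<ge> Y \<longrightarrow>
              (\<exists>S F. S \<subseteq> DS (Pset E \<delta> y s) \<and> partition_on S F \<and>
                 real (card F) = 2 ^ card (Pset E \<delta> y s) / (2 * real M) \<and>
                 (\<forall>T\<in>F. card T = M \<and> log_spread_gt T 1)))"
proof -
  obtain k where "M = 2^k"
    using M_pow2 by blast
  have "\<forall>\<^sub>F y in at_top. 4 * M^2 + 1 \<le> card (smooth_shifted_primes E y) \<and> 1 \<le> y / ln y \<and>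
          (\<forall>b<4 * M^2. exp 1 * y^b < (y / ln y)^(b+1))"
    using eventually_card_smooth_shifted_primes_ge[OF gamma_pos hypE, of "4 * M^2 + 1"]
      div_ln_at_top[unfolded filterlim_at_top] eventually_exp_mult_power_lt[of "4 * M^2"]
    by (intro eventually_conj) auto
  then obtain Y where Y: "4 * M^2 + 1 \<le> card (smooth_shifted_primes E y)" "1 \<le> y / ln y"
      "\<forall>b<4 * M^2. exp 1 * y^b < (y / ln y)^(b+1)" if "Y \<le> y" for y
    unfolding eventually_at_top_linorder by blast
  have "\<exists>S F. S \<subseteq> DS (Pset E \<delta> y s) \<and> partition_on S F \<and>
          real (card F) = 2 ^ card (Pset E \<delta> y s) / (2 * real M) \<and>
          (\<forall>T\<in>F. card T = M \<and> log_spread_gt T 1)" if "Y \<le> y" for y s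
    using exists_spread_partition_of_Pset[OF \<open>M = 2^k\<close> Y[OF that]] .
  then show ?thesis
    by (intro exI[of _ Y]) blast
qed

end
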